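(* Let $\mathcal H$ be a complex Hilbert space and $T\in\mathcal B(\mathcal H)$ left-invertible with $0\in\sigma(T)$, and let $T'=T(T^*T)^{-1}$. Then: (i) if $\sigma_r(T')\subseteq\overline{\mathbb D}$, then $\mathbb D\subseteq\sigma_r(T)\setminus\sigma_l(T)$; (ii) if $\|T\|\le1$ and $\sigma_r(T')\subseteq\overline{\mathbb D}$, then $\sigma_r(T)=\sigma(T)=\overline{\mathbb D}$.
   Context: $\mathbb D$ is the open unit disc; $\sigma_l$, $\sigma_r$ denote the left and right spectrum (set of $\lambda$ with $A-\lambda I$ not left-, resp. not right-, invertible). *)

theory Defs
  imports "HOL-Analysis.Analysis"
begin

text \<open>A complex Hilbert space is modelled as a type 'a with addition, together with
  a complex scalar multiplication scal and an inner product ip (linear in the first,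
  conjugate-linear in the second argument), complete w.r.t. the induced norm.\<close>

definition hnorm :: "('a \<Rightarrow> 'a \<Rightarrow> complex) \<Rightarrow> 'a \<Rightarrow> real" where
  "hnorm ip x = sqrt (Re (ip x x))"

definition complex_hilbert_space ::
  "(complex \<Rightarrow> 'a::ab_group_add \<Rightarrow> 'a) \<Rightarrow> ('a \<Rightarrow> 'a \<Rightarrow> complex) \<Rightarrow> bool" where
  "complex_hilbert_space scal ip \<longleftrightarrow>
     (\<forall>a x y. scal a (x + y) = scal a x + scal a y) \<and>
     (\<forall>a b x. scal (a + b) x = scal a x + scal b x) \<and>
     (\<forall>a b x. scal a (scal b x) = scal (a * b) x) \<and>
     (\<forall>x. scal 1 x = x) \<and>
     (\<forall>x y z. ip (x + y) z = ip x z + ip y z) \<and>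
     (\<forall>a x y. ip (scal a x) y = a * ip x y) \<and>
     (\<forall>x y. ip x y = cnj (ip y x)) \<and>
     (\<forall>x. Im (ip x x) = 0 \<and> Re (ip x x) \<ge> 0) \<and>
     (\<forall>x. ip x x = 0 \<longrightarrow> x = 0) \<and>
     (\<forall>X :: nat \<Rightarrow> 'a.
        (\<forall>e>0. \<exists>N. \<forall>m\<ge>N. \<forall>n\<ge>N. hnorm ip (X m - X n) < e) \<longrightarrow>
        (\<exists>L. (\<lambda>n. hnorm ip (X n - L)) \<longlonglongrightarrow> 0))"

definition bop ::
  "(complex \<Rightarrow> 'a::ab_group_add \<Rightarrow> 'a) \<Rightarrow> ('a \<Rightarrow> 'a \<Rightarrow> complex) \<Rightarrow> ('a \<Rightarrow> 'a) \<Rightarrow> bool" where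
  "bop scal ip T \<longleftrightarrow>
     (\<forall>x y. T (x + y) = T x + T y) \<and> (\<forall>a x. T (scal a x) = scal a (T x)) \<and>
     (\<exists>K. \<forall>x. hnorm ip (T x) \<le> K * hnorm ip x)"

definition adj ::
  "(complex \<Rightarrow> 'a::ab_group_add \<Rightarrow> 'a) \<Rightarrow> ('a \<Rightarrow> 'a \<Rightarrow> complex) \<Rightarrow> ('a \<Rightarrow> 'a) \<Rightarrow> ('a \<Rightarrow> 'a)" where
  "adj scal ip T = (SOME S. bop scal ip S \<and> (\<forall>x y. ip (T x) y = ip x (S y)))"

definition left_invertible ::
  "(complex \<Rightarrow> 'a::ab_group_add \<Rightarrow> 'a) \<Rightarrow> ('a \<Rightarrow> 'a \<Rightarrow> complex) \<Rightarrow> ('a \<Rightarrow> 'a) \<Rightarrow> bool" where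
  "left_invertible scal ip T \<longleftrightarrow> (\<exists>S. bop scal ip S \<and> S \<circ> T = id)"

definition right_invertible ::
  "(complex \<Rightarrow> 'a::ab_group_add \<Rightarrow> 'a) \<Rightarrow> ('a \<Rightarrow> 'a \<Rightarrow> complex) \<Rightarrow> ('a \<Rightarrow> 'a) \<Rightarrow> bool" where
  "right_invertible scal ip T \<longleftrightarrow> (\<exists>S. bop scal ip S \<and> T \<circ> S = id)"

definition op_invertible ::
  "(complex \<Rightarrow> 'a::ab_group_add \<Rightarrow> 'a) \<Rightarrow> ('a \<Rightarrow> 'a \<Rightarrow> complex) \<Rightarrow> ('a \<Rightarrow> 'a) \<Rightarrow> bool" where
  "op_invertible scal ip T \<longleftrightarrow> (\<exists>S. bop scal ip S \<and> S \<circ> T = id \<and> T \<circ> S = id)"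

definition op_inv ::
  "(complex \<Rightarrow> 'a::ab_group_add \<Rightarrow> 'a) \<Rightarrow> ('a \<Rightarrow> 'a \<Rightarrow> complex) \<Rightarrow> ('a \<Rightarrow> 'a) \<Rightarrow> ('a \<Rightarrow> 'a)" where
  "op_inv scal ip T = (SOME S. bop scal ip S \<and> S \<circ> T = id \<and> T \<circ> S = id)"

definition shift_op :: "(complex \<Rightarrow> 'a::ab_group_add \<Rightarrow> 'a) \<Rightarrow> ('a \<Rightarrow> 'a) \<Rightarrow> complex \<Rightarrow> ('a \<Rightarrow> 'a)" where
  "shift_op scal T l = (\<lambda>x. T x - scal l x)"

definition op_spectrum where
  "op_spectrum scal ip T = {l. \<not> op_invertible scal ip (shift_op scal T l)}"

definition left_spectrum where
  "left_spectrum scal ip T = {l. \<not> left_invertible scal ip (shift_op scal T l)}"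

definition right_spectrum where
  "right_spectrum scal ip T = {l. \<not> right_invertible scal ip (shift_op scal T l)}"

definition cauchy_dual where
  "cauchy_dual scal ip T = T \<circ> op_inv scal ip (adj scal ip T \<circ> T)"

end

theory Submission
  imports Defs
begin

(* For 0 < |l| < 1 the hypothesis on the right spectrum of T' makes T' - 1/cnj l right-invertible.
   The adjoint of T' is L = (T*T)^-1 T*, a left inverse of T, so taking adjoints yields a left
   inverse of L - 1/l = - L (T - l) / l, and hence one of T - l: all of T - l, |l| < 1, are
   left-invertible. Right-invertibility is an open condition, and for left-invertible operators so
   is its failure, because a nonzero vector orthogonal to the range survives small perturbations.
   The open disc is connected and T itself is left-invertible but singular, hence not
   right-invertible; so no T - l with |l| < 1 is. If moreover ||T|| <= 1, a Neumann series puts the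
   spectrum inside the closed disc, and the right spectrum, being closed, contains it. *)

locale complex_hilbert =
  fixes scal :: "complex \<Rightarrow> 'a::ab_group_add \<Rightarrow> 'a" and ip :: "'a \<Rightarrow> 'a \<Rightarrow> complex"
  assumes hilbert: "complex_hilbert_space scal ip"
begin

abbreviation nrm :: "'a \<Rightarrow> real" where
  "nrm x \<equiv> hnorm ip x"

lemma hilbert_laws:
  "(\<forall>a x y. scal a (x + y) = scal a x + scal a y) \<and>
   (\<forall>a b x. scal (a + b) x = scal a x + scal b x) \<and>
   (\<forall>a b x. scal a (scal b x) = scal (a * b) x) \<and>
   (\<forall>x. scal 1 x = x) \<and>
   (\<forall>x y z. ip (x + y) z = ip x z + ip y z) \<and>
   (\<forall>a x y. ip (scal a x) y = a * ip x y) \<and>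
   (\<forall>x y. ip x y = cnj (ip y x)) \<and>
   (\<forall>x. Im (ip x x) = 0 \<and> Re (ip x x) \<ge> 0) \<and>
   (\<forall>x. ip x x = 0 \<longrightarrow> x = 0)"
  using hilbert unfolding complex_hilbert_space_def by (elim conjE, intro conjI) assumption+

lemma scal_add_right: "scal a (x + y) = scal a x + scal a y"
  using hilbert_laws by (elim conjE allE) assumption

lemma scal_add_left: "scal (a + b) x = scal a x + scal b x"
  using hilbert_laws by (elim conjE allE) assumption

lemma scal_scal: "scal a (scal b x) = scal (a * b) x"
  using hilbert_laws by (elim conjE allE) assumption

lemma scal_one [simp]: "scal 1 x = x"
  using hilbert_laws by (elim conjE allE) assumption

lemma ip_add_left: "ip (x + y) z = ip x z + ip y z"
  using hilbert_laws by (elim conjE allE) assumption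

lemma ip_scal_left: "ip (scal a x) y = a * ip x y"
  using hilbert_laws by (elim conjE allE) assumption

lemma ip_conj_sym: "ip x y = cnj (ip y x)"
  using hilbert_laws by (elim conjE allE) assumption

lemma ip_self_Im [simp]: "Im (ip x x) = 0"
  using hilbert_laws by (elim conjE allE) assumption

lemma ip_self_Re_nonneg: "Re (ip x x) \<ge> 0"
  using hilbert_laws by (elim conjE allE) assumption

lemma ip_self_eq_0: "ip x x = 0 \<Longrightarrow> x = 0"
  using hilbert_laws by blast

lemma scal_zero_left [simp]: "scal 0 x = 0"
  using scal_add_left[of 0 0 x] by simp

lemma scal_zero_right [simp]: "scal a 0 = 0"
  using scal_add_right[of a 0 0] by simp

lemma scal_minus_left: "scal (- a) x = - scal a x"
  using scal_add_left[of a "-a" x] by (simp add: eq_neg_iff_add_eq_0 add.commute)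

lemma scal_minus_right: "scal a (- x) = - scal a x"
  using scal_add_right[of a x "-x"] by (simp add: eq_neg_iff_add_eq_0 add.commute)

lemma scal_diff_right: "scal a (x - y) = scal a x - scal a y"
  using scal_add_right[of a x "-y"] by (simp add: scal_minus_right)

lemma scal_diff_left: "scal (a - b) x = scal a x - scal b x"
  using scal_add_left[of a "-b" x] by (simp add: scal_minus_left)

lemma ip_add_right: "ip x (y + z) = ip x y + ip x z"
  by (subst (1 2 3) ip_conj_sym) (simp add: ip_add_left)

lemma ip_scal_right: "ip x (scal a y) = cnj a * ip x y"
  by (subst (1 2) ip_conj_sym) (simp add: ip_scal_left)

lemma ip_zero_left [simp]: "ip 0 y = 0"
  using ip_add_left[of 0 0 y] by simp

lemma ip_zero_right [simp]: "ip x 0 = 0"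
  using ip_add_right[of x 0 0] by simp

lemma ip_minus_left: "ip (- x) y = - ip x y"
  using ip_add_left[of x "-x" y] by (simp add: eq_neg_iff_add_eq_0 add.commute)

lemma ip_minus_right: "ip x (- y) = - ip x y"
  using ip_add_right[of x y "-y"] by (simp add: eq_neg_iff_add_eq_0 add.commute)

lemma ip_diff_left: "ip (x - y) z = ip x z - ip y z"
  using ip_add_left[of x "-y" z] by (simp add: ip_minus_left)

lemma ip_diff_right: "ip x (y - z) = ip x y - ip x z"
  using ip_add_right[of x y "-z"] by (simp add: ip_minus_right)

lemma ip_right_cancel: "(\<And>x. ip x u = ip x v) \<Longrightarrow> u = v"
  using ip_self_eq_0[of "u - v"] by (simp add: ip_diff_right)

lemma ip_left_cancel: "(\<And>x. ip u x = ip v x) \<Longrightarrow> u = v"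
  using ip_self_eq_0[of "u - v"] by (simp add: ip_diff_left)

lemma nrm_nonneg: "nrm x \<ge> 0"
  by (simp add: hnorm_def ip_self_Re_nonneg)

lemma nrm_square: "(nrm x)\<^sup>2 = Re (ip x x)"
  using ip_self_Re_nonneg[of x] by (simp add: hnorm_def)

lemma ip_self: "ip x x = complex_of_real ((nrm x)\<^sup>2)"
  by (simp add: nrm_square complex_eqI)

lemma nrm_zero [simp]: "nrm 0 = 0"
  by (simp add: hnorm_def)

lemma nrm_eq_0_iff: "nrm x = 0 \<longleftrightarrow> x = 0"
  using ip_self_eq_0[of x] by (auto simp: ip_self)

lemma nrm_pos: "x \<noteq> 0 \<Longrightarrow> nrm x > 0"
  using nrm_nonneg[of x] nrm_eq_0_iff[of x] by linarith

lemma nrm_scal: "nrm (scal a x) = cmod a * nrm x"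
proof -
  have "ip (scal a x) (scal a x) = (a * cnj a) * ip x x"
    by (simp add: ip_scal_left ip_scal_right)
  also have "a * cnj a = complex_of_real ((cmod a)\<^sup>2)"
    using complex_norm_square[of a] by simp
  finally have "(nrm (scal a x))\<^sup>2 = (cmod a * nrm x)\<^sup>2"
    by (simp add: nrm_square power_mult_distrib)
  then show ?thesis
    by (rule power2_eq_imp_eq) (simp_all add: nrm_nonneg)
qed

lemma nrm_minus: "nrm (- x) = nrm x"
  using nrm_scal[of "-1" x] by (simp add: scal_minus_left)

lemma nrm_minus_commute: "nrm (x - y) = nrm (y - x)"
  using nrm_minus[of "x - y"] by simp

lemma nrm_add_square: "(nrm (x + y))\<^sup>2 = (nrm x)\<^sup>2 + (nrm y)\<^sup>2 + 2 * Re (ip x y)"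
proof -
  have "ip (x + y) (x + y) = ip x x + ip y y + (ip x y + cnj (ip x y))"
    by (simp add: ip_add_left ip_add_right ip_conj_sym[of y x])
  then show ?thesis
    by (simp add: nrm_square)
qed

lemma nrm_diff_square: "(nrm (x - y))\<^sup>2 = (nrm x)\<^sup>2 + (nrm y)\<^sup>2 - 2 * Re (ip x y)"
  using nrm_add_square[of x "-y"] by (simp add: nrm_minus ip_minus_right)

lemma parallelogram: "(nrm (x - y))\<^sup>2 + (nrm (x + y))\<^sup>2 = 2 * (nrm x)\<^sup>2 + 2 * (nrm y)\<^sup>2"
  using nrm_add_square[of x y] nrm_diff_square[of x y] by simp

lemma cauchy_schwarz: "cmod (ip x y) \<le> nrm x * nrm y"
proof (cases "y = 0")
  case False
  define n where "n = (nrm y)\<^sup>2"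
  have n: "n > 0"
    using nrm_pos[OF False] by (simp add: n_def)
  define t where "t = ip x y / complex_of_real n"
  have "0 \<le> (nrm (x - scal t y))\<^sup>2"
    by simp
  also have "\<dots> = (nrm x)\<^sup>2 + (cmod t)\<^sup>2 * n - 2 * Re (cnj t * ip x y)"
    by (simp add: nrm_diff_square nrm_scal ip_scal_right power_mult_distrib n_def)
  also have "cnj t * ip x y = complex_of_real ((cmod (ip x y))\<^sup>2 / n)"
    unfolding t_def using n complex_norm_square[of "ip x y"] by (simp add: mult.commute)
  also have "(cmod t)\<^sup>2 * n = (cmod (ip x y))\<^sup>2 / n"
    unfolding t_def using n by (simp add: norm_divide power2_eq_square)
  finally have "(cmod (ip x y))\<^sup>2 \<le> (nrm x * nrm y)\<^sup>2"
    using n by (simp add: field_simps n_def power_mult_distrib)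
  then show ?thesis
    by (rule power2_le_imp_le) (simp add: nrm_nonneg)
qed simp

lemma Re_ip_le: "Re (ip x y) \<le> nrm x * nrm y"
  using cauchy_schwarz[of x y] complex_Re_le_cmod order_trans by blast

lemma nrm_triangle: "nrm (x + y) \<le> nrm x + nrm y"
proof -
  have "(nrm (x + y))\<^sup>2 \<le> (nrm x + nrm y)\<^sup>2"
    using nrm_add_square[of x y] Re_ip_le[of x y] by (simp add: power2_sum)
  then show ?thesis
    using nrm_nonneg by (meson add_nonneg_nonneg power2_le_imp_le)
qed

lemma nrm_triangle_diff: "nrm (x - z) \<le> nrm (x - y) + nrm (y - z)"
  using nrm_triangle[of "x - y" "y - z"] by simp

lemma nrm_diff_ge: "\<bar>nrm x - nrm y\<bar> \<le> nrm (x - y)"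
  using nrm_triangle[of "x - y" y] nrm_triangle[of "y - x" x] nrm_minus_commute[of x y] by auto

definition converges_to :: "(nat \<Rightarrow> 'a) \<Rightarrow> 'a \<Rightarrow> bool" where
  "converges_to X L \<longleftrightarrow> (\<lambda>n. nrm (X n - L)) \<longlonglongrightarrow> 0"

lemma hilbert_complete:
  assumes "\<And>e. e > 0 \<Longrightarrow> \<exists>N. \<forall>m\<ge>N. \<forall>n\<ge>N. nrm (X m - X n) < e"
  shows "\<exists>L. converges_to X L"
proof -
  have "\<forall>e>0. \<exists>N. \<forall>m\<ge>N. \<forall>n\<ge>N. nrm (X m - X n) < e"
    using assms by blast
  then show ?thesis
    using hilbert unfolding complex_hilbert_space_def converges_to_def by blast
qed

lemma converges_to_unique:
  assumes "converges_to X L" "converges_to X M"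
  shows "L = M"
proof -
  have bound: "nrm (L - M) \<le> nrm (X n - L) + nrm (X n - M)" for n
    using nrm_triangle_diff[of L M "X n"] nrm_minus_commute[of L "X n"] by simp
  have "(\<lambda>n. nrm (X n - L) + nrm (X n - M)) \<longlonglongrightarrow> 0"
    using tendsto_add[OF assms[unfolded converges_to_def]] by simp
  then have "nrm (L - M) \<le> 0"
    using LIMSEQ_le_const[of _ 0 "nrm (L - M)"] bound by blast
  then show ?thesis
    using nrm_nonneg[of "L - M"] nrm_eq_0_iff[of "L - M"] by simp
qed

lemma converges_to_nrm:
  assumes "converges_to X L"
  shows "(\<lambda>n. nrm (X n)) \<longlonglongrightarrow> nrm L"
proof -
  have "\<forall>\<^sub>F n in sequentially. norm (nrm (X n) - nrm L) \<le> nrm (X n - L)"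
    using nrm_diff_ge by simp
  moreover have "(\<lambda>n. nrm (X n - L)) \<longlonglongrightarrow> 0"
    using assms by (simp add: converges_to_def)
  ultimately have "(\<lambda>n. nrm (X n) - nrm L) \<longlonglongrightarrow> 0"
    by (rule Lim_null_comparison)
  then show ?thesis
    by (simp add: LIM_zero_iff)
qed

lemma geometric_steps_tail:
  assumes K: "0 \<le> K" "K < 1" and steps: "\<And>n. nrm (X (Suc n) - X n) \<le> C * K ^ n"
  shows "nrm (X (n + k) - X n) \<le> C * K ^ n / (1 - K)"
proof -
  have C: "C \<ge> 0"
    using steps[of 0] nrm_nonneg[of "X 1 - X 0"] by simp
  have "nrm (X (n + k) - X n) \<le> C * (\<Sum>i<k. K ^ (n + i))"
  proof (induction k)
    case (Suc k)
    have "nrm (X (n + Suc k) - X n) \<le> nrm (X (Suc (n + k)) - X (n + k)) + nrm (X (n + k) - X n)"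
      using nrm_triangle_diff by simp
    also have "\<dots> \<le> C * K ^ (n + k) + C * (\<Sum>i<k. K ^ (n + i))"
      using steps Suc by (intro add_mono) auto
    finally show ?case
      by (simp add: distrib_left)
  qed simp
  also have "\<dots> \<le> C * (K ^ n / (1 - K))"
  proof (rule mult_left_mono[OF _ C])
    have "(\<Sum>i<k. K ^ (n + i)) = K ^ n * (\<Sum>i<k. K ^ i)"
      by (simp add: power_add sum_distrib_left)
    also have "(\<Sum>i<k. K ^ i) = (1 - K ^ k) / (1 - K)"
      using K by (simp add: sum_gp_strict)
    also have "K ^ n * ((1 - K ^ k) / (1 - K)) \<le> K ^ n / (1 - K)"
      using K by (simp add: divide_right_mono mult_left_le)
    finally show "(\<Sum>i<k. K ^ (n + i)) \<le> K ^ n / (1 - K)" .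
  qed
  finally show ?thesis
    by simp
qed

lemma converges_to_geometric:
  assumes K: "0 \<le> K" "K < 1" and steps: "\<And>n. nrm (X (Suc n) - X n) \<le> C * K ^ n"
  shows "\<exists>L. converges_to X L"
proof -
  have C: "C \<ge> 0"
    using steps[of 0] nrm_nonneg[of "X 1 - X 0"] by simp
  note tail = geometric_steps_tail[OF K steps]
  have "(\<lambda>n. C / (1 - K) * K ^ n) \<longlonglongrightarrow> C / (1 - K) * 0"
    using K by (intro tendsto_mult tendsto_const LIMSEQ_power_zero) auto
  then have lim: "(\<lambda>n. C * K ^ n / (1 - K)) \<longlonglongrightarrow> 0"
    by simp
  have cauchy: "\<exists>N. \<forall>m\<ge>N. \<forall>n\<ge>N. nrm (X m - X n) < e" if "e > 0" for e
  proof -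
    obtain N where N: "C * K ^ N / (1 - K) < e"
      using order_tendstoD(2)[OF lim \<open>e > 0\<close>] by (auto simp: eventually_sequentially)
    have ordered: "nrm (X m - X n) < e" if "N \<le> n" "n \<le> m" for m n
    proof -
      have "nrm (X m - X n) \<le> C * K ^ n / (1 - K)"
        using tail[of n "m - n"] that by simp
      also have "\<dots> \<le> C * K ^ N / (1 - K)"
        using K C that by (intro divide_right_mono mult_left_mono power_decreasing) auto
      finally show ?thesis
        using N by linarith
    qed
    show ?thesis
    proof (intro exI allI impI)
      fix m n
      assume "m \<ge> N" "n \<ge> N"
      then show "nrm (X m - X n) < e"
        using ordered[of n m] ordered[of m n] nrm_minus_commute[of "X m" "X n"]
        by (cases "n \<le> m") auto
    qed
  qed
  then show ?thesis
    by (rule hilbert_complete)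
qed

lemma bopI:
  assumes "\<And>x y. A (x + y) = A x + A y" "\<And>a x. A (scal a x) = scal a (A x)"
    and "\<And>x. nrm (A x) \<le> K * nrm x"
  shows "bop scal ip A"
  unfolding bop_def using assms by blast

lemma bop_add: "bop scal ip A \<Longrightarrow> A (x + y) = A x + A y"
  unfolding bop_def by blast

lemma bop_scal: "bop scal ip A \<Longrightarrow> A (scal a x) = scal a (A x)"
  unfolding bop_def by blast

lemma bop_zero: "bop scal ip A \<Longrightarrow> A 0 = 0"
  using bop_add[of A 0 0] by simp

lemma bop_minus: "bop scal ip A \<Longrightarrow> A (- x) = - A x"
  using bop_add[of A x "- x"] bop_zero[of A] by (simp add: eq_neg_iff_add_eq_0 add.commute)

lemma bop_diff: "bop scal ip A \<Longrightarrow> A (x - y) = A x - A y"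
  using bop_add[of A x "- y"] bop_minus[of A y] by simp

lemma bop_bound:
  assumes "bop scal ip A"
  obtains K where "K > 0" "\<And>x. nrm (A x) \<le> K * nrm x"
proof -
  obtain K where K: "\<And>x. nrm (A x) \<le> K * nrm x"
    using assms unfolding bop_def by blast
  have "nrm (A x) \<le> max K 1 * nrm x" for x
    using K[of x] nrm_nonneg[of x] by (meson max.cobounded1 mult_right_mono order_trans)
  then show ?thesis
    using that[of "max K 1"] by simp
qed

lemma bop_id: "bop scal ip (\<lambda>x. x)"
  by (rule bopI[where K=1]) auto

lemma bop_comp:
  assumes "bop scal ip A" "bop scal ip B"
  shows "bop scal ip (\<lambda>x. A (B x))"
proof -
  obtain KA where KA: "KA > 0" "\<And>x. nrm (A x) \<le> KA * nrm x"
    using bop_bound[OF assms(1)] by blast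
  obtain KB where KB: "KB > 0" "\<And>x. nrm (B x) \<le> KB * nrm x"
    using bop_bound[OF assms(2)] by blast
  show ?thesis
  proof (rule bopI[where K="KA * KB"])
    fix x
    have "nrm (A (B x)) \<le> KA * nrm (B x)"
      by (rule KA)
    also have "\<dots> \<le> KA * (KB * nrm x)"
      using KA KB by (intro mult_left_mono) auto
    finally show "nrm (A (B x)) \<le> KA * KB * nrm x"
      by simp
  qed (simp_all add: assms bop_add bop_scal)
qed

lemma bop_minus_op:
  assumes "bop scal ip A" "bop scal ip B"
  shows "bop scal ip (\<lambda>x. A x - B x)"
proof -
  obtain KA where KA: "KA > 0" "\<And>x. nrm (A x) \<le> KA * nrm x"
    using bop_bound[OF assms(1)] by blast
  obtain KB where KB: "KB > 0" "\<And>x. nrm (B x) \<le> KB * nrm x"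
    using bop_bound[OF assms(2)] by blast
  show ?thesis
  proof (rule bopI[where K="KA + KB"])
    fix x
    have "nrm (A x - B x) \<le> nrm (A x) + nrm (B x)"
      using nrm_triangle[of "A x" "- B x"] nrm_minus[of "B x"] by simp
    also have "\<dots> \<le> (KA + KB) * nrm x"
      using KA KB by (simp add: distrib_right add_mono)
    finally show "nrm (A x - B x) \<le> (KA + KB) * nrm x" .
  qed (simp_all add: assms bop_add bop_scal scal_add_right scal_diff_right)
qed

lemma bop_scal_op:
  assumes "bop scal ip A"
  shows "bop scal ip (\<lambda>x. scal c (A x))"
proof -
  obtain K where K: "K > 0" "\<And>x. nrm (A x) \<le> K * nrm x"
    using bop_bound[OF assms] by blast
  show ?thesis
  proof (rule bopI[where K="cmod c * K"])
    show "nrm (scal c (A x)) \<le> cmod c * K * nrm x" for x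
      using K by (simp add: nrm_scal mult.assoc mult_left_mono)
  qed (simp_all add: assms bop_add bop_scal scal_add_right scal_scal mult.commute)
qed

lemma bop_scal_id: "bop scal ip (scal c)"
  using bop_scal_op[OF bop_id] by simp

lemma converges_to_bop:
  assumes "bop scal ip A" "converges_to X L"
  shows "converges_to (\<lambda>n. A (X n)) (A L)"
proof -
  obtain K where K: "K > 0" "\<And>x. nrm (A x) \<le> K * nrm x"
    using bop_bound[OF assms(1)] by blast
  have "\<forall>\<^sub>F n in sequentially. norm (nrm (A (X n) - A L)) \<le> K * nrm (X n - L)"
    using K(2) by (simp add: bop_diff[OF assms(1), symmetric] nrm_nonneg)
  moreover have "(\<lambda>n. K * nrm (X n - L)) \<longlonglongrightarrow> 0"
    using assms(2) unfolding converges_to_def by (rule tendsto_mult_right_zero)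
  ultimately show ?thesis
    unfolding converges_to_def by (rule Lim_null_comparison)
qed

lemma bounded_below_surj_inverse:
  assumes B: "bop scal ip B" and surj: "\<And>y. \<exists>x. B x = y"
    and below: "\<And>x. nrm x \<le> c * nrm (B x)"
  obtains S where "bop scal ip S" "\<And>y. B (S y) = y" "\<And>x. S (B x) = x"
proof -
  have inj: "x = x'" if "B x = B x'" for x x'
    using below[of "x - x'"] that nrm_nonneg[of "x - x'"] nrm_eq_0_iff[of "x - x'"]
    by (simp add: bop_diff[OF B])
  define S where "S y = (SOME x. B x = y)" for y
  have BS: "B (S y) = y" for y
    unfolding S_def by (rule someI_ex[OF surj])
  have SB: "S (B x) = x" for x
    using BS[of "B x"] inj by blast
  have "bop scal ip S"
  proof (rule bopI[where K=c])
    show "S (x + y) = S x + S y" for x y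
      by (rule inj) (simp add: BS bop_add[OF B])
    show "S (scal a x) = scal a (S x)" for a x
      by (rule inj) (simp add: BS bop_scal[OF B])
    show "nrm (S x) \<le> c * nrm x" for x
      using below[of "S x"] by (simp add: BS)
  qed
  then show ?thesis
    using that BS SB by blast
qed

lemma surj_id_minus_contraction:
  assumes A: "bop scal ip A" and K: "\<And>x. nrm (A x) \<le> K * nrm x" "0 \<le> K" "K < 1"
  shows "\<exists>x. x - A x = y"
proof -
  define X where "X = rec_nat 0 (\<lambda>_ x. y + A x)"
  have X0: "X 0 = 0" and XS: "X (Suc n) = y + A (X n)" for n
    by (simp_all add: X_def)
  have "nrm (X (Suc n) - X n) \<le> nrm y * K ^ n" for n
  proof (induction n)
    case 0
    then show ?case
      by (simp add: X0 XS bop_zero[OF A])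
  next
    case (Suc n)
    have "nrm (X (Suc (Suc n)) - X (Suc n)) \<le> K * nrm (X (Suc n) - X n)"
      using K(1) by (simp add: XS bop_diff[OF A, symmetric])
    also have "\<dots> \<le> K * (nrm y * K ^ n)"
      using Suc K(2) by (rule mult_left_mono)
    finally show ?case
      by (simp add: mult_ac)
  qed
  then obtain L where L: "converges_to X L"
    using converges_to_geometric[OF K(2,3)] by blast
  have "converges_to (\<lambda>n. X (Suc n)) L"
    using L unfolding converges_to_def by (rule LIMSEQ_Suc)
  moreover have "converges_to (\<lambda>n. X (Suc n)) (y + A L)"
    using converges_to_bop[OF A L] by (simp add: XS converges_to_def)
  ultimately have "L = y + A L"
    by (rule converges_to_unique)
  then show ?thesis
    by (intro exI[of _ L]) (simp add: algebra_simps)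
qed

lemma neumann_inverse:
  assumes A: "bop scal ip A" and K: "\<And>x. nrm (A x) \<le> K * nrm x" "0 \<le> K" "K < 1"
  obtains W where "bop scal ip W" "\<And>y. W y - A (W y) = y" "\<And>x. W (x - A x) = x"
proof (rule bounded_below_surj_inverse)
  show "bop scal ip (\<lambda>x. x - A x)"
    using bop_minus_op[OF bop_id A] .
  show "\<exists>x. x - A x = y" for y
    by (rule surj_id_minus_contraction[OF A K])
  show "nrm x \<le> (1 / (1 - K)) * nrm (x - A x)" for x
  proof -
    have "nrm x \<le> nrm (x - A x) + nrm (A x)"
      using nrm_triangle[of "x - A x" "A x"] by simp
    also have "\<dots> \<le> nrm (x - A x) + K * nrm x"
      using K(1) by simp
    finally have "(1 - K) * nrm x \<le> nrm (x - A x)"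
      by (simp add: algebra_simps)
    then show ?thesis
      using K by (simp add: field_simps)
  qed
qed (rule that)

lemma minimizing_sequence_Cauchy:
  assumes midpoint: "\<And>x y. x \<in> C \<Longrightarrow> y \<in> C \<Longrightarrow> scal (1/2) (x + y) \<in> C"
    and D: "\<And>x. x \<in> C \<Longrightarrow> D \<le> (nrm x)\<^sup>2"
    and X: "\<And>n. X n \<in> C" "\<And>n. (nrm (X n))\<^sup>2 < D + inverse (real (Suc n))"
    and e: "e > 0"
  shows "\<exists>N. \<forall>m\<ge>N. \<forall>n\<ge>N. nrm (X m - X n) < e"
proof -
  have close: "(nrm (x - y))\<^sup>2 \<le> 2 * (nrm x)\<^sup>2 + 2 * (nrm y)\<^sup>2 - 4 * D"
    if "x \<in> C" "y \<in> C" for x y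
  proof -
    have "D \<le> (nrm (scal (1/2) (x + y)))\<^sup>2"
      using D midpoint that by blast
    also have "\<dots> = (nrm (x + y))\<^sup>2 / 4"
      by (simp add: nrm_scal power_mult_distrib power_divide)
    finally show ?thesis
      using parallelogram[of x y] by simp
  qed
  obtain N :: nat where N: "4 / e\<^sup>2 < real N"
    using reals_Archimedean2 by blast
  have "nrm (X m - X n) < e" if "m \<ge> N" "n \<ge> N" for m n
  proof -
    have "inverse (real (Suc m)) \<le> inverse (real (Suc N))" "inverse (real (Suc n)) \<le> inverse (real (Suc N))"
      using that by (simp_all add: le_imp_inverse_le)
    then have "(nrm (X m - X n))\<^sup>2 \<le> 4 * inverse (real (Suc N))"
      using close[OF X(1) X(1), of m n] X(2)[of m] X(2)[of n] by linarith
    also have "\<dots> < e\<^sup>2"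
      using N e by (simp add: field_simps) (smt (verit) zero_less_power)
    finally show ?thesis
      using e nrm_nonneg by (simp add: power_less_imp_less_base)
  qed
  then show ?thesis
    by blast
qed

lemma min_norm_point:
  assumes "C \<noteq> {}"
    and midpoint: "\<And>x y. x \<in> C \<Longrightarrow> y \<in> C \<Longrightarrow> scal (1/2) (x + y) \<in> C"
    and closed: "\<And>X L. (\<And>n. X n \<in> C) \<Longrightarrow> converges_to X L \<Longrightarrow> L \<in> C"
  obtains L where "L \<in> C" "\<And>x. x \<in> C \<Longrightarrow> nrm L \<le> nrm x"
proof -
  define D where "D = Inf ((\<lambda>x. (nrm x)\<^sup>2) ` C)"
  have D: "D \<le> (nrm x)\<^sup>2" if "x \<in> C" for x
    unfolding D_def using that by (intro cInf_lower bdd_belowI[of _ 0]) auto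
  have "\<exists>x. x \<in> C \<and> (nrm x)\<^sup>2 < D + inverse (real (Suc n))" for n
  proof -
    have "Inf ((\<lambda>x. (nrm x)\<^sup>2) ` C) < D + inverse (real (Suc n))"
      unfolding D_def by simp
    then show ?thesis
      using cInf_lessD[of "(\<lambda>x. (nrm x)\<^sup>2) ` C"] \<open>C \<noteq> {}\<close> by blast
  qed
  then obtain X where X: "\<And>n. X n \<in> C" "\<And>n. (nrm (X n))\<^sup>2 < D + inverse (real (Suc n))"
    using choice[of "\<lambda>n x. x \<in> C \<and> (nrm x)\<^sup>2 < D + inverse (real (Suc n))"] by auto
  obtain L where L: "converges_to X L"
    using hilbert_complete[OF minimizing_sequence_Cauchy[OF midpoint D X]] by blast
  have LD: "(nrm L)\<^sup>2 \<le> D"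
  proof (rule LIMSEQ_le)
    show "(\<lambda>n. (nrm (X n))\<^sup>2) \<longlonglongrightarrow> (nrm L)\<^sup>2"
      using converges_to_nrm[OF L] by (rule tendsto_power)
    show "(\<lambda>n. D + inverse (real (Suc n))) \<longlonglongrightarrow> D"
      using tendsto_add[OF tendsto_const LIMSEQ_inverse_real_of_nat, of D] by simp
    show "\<exists>N. \<forall>n\<ge>N. (nrm (X n))\<^sup>2 \<le> D + inverse (real (Suc n))"
      by (intro exI[of _ 0] allI impI less_imp_le X(2))
  qed
  have "nrm L \<le> nrm x" if "x \<in> C" for x
    using order_trans[OF LD D[OF that]] nrm_nonneg[of x] by (rule power2_le_imp_le)
  then show ?thesis
    by (rule that[OF closed[OF X(1) L]])
qed

lemma min_norm_orthogonal:
  assumes min: "\<And>t. nrm L \<le> nrm (L + scal t k)"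
  shows "ip L k = 0"
proof (cases "k = 0")
  case False
  define w where "w = ip L k"
  define n where "n = (nrm k)\<^sup>2"
  have n: "n > 0"
    using nrm_pos[OF False] by (simp add: n_def)
  define t where "t = - w / complex_of_real n"
  have "cnj t * w = - complex_of_real ((cmod w)\<^sup>2 / n)"
    using complex_norm_square[of w] by (simp add: t_def mult.commute)
  moreover have "(cmod t)\<^sup>2 * n = (cmod w)\<^sup>2 / n"
    using n by (simp add: t_def norm_divide power2_eq_square)
  ultimately have "(nrm (L + scal t k))\<^sup>2 = (nrm L)\<^sup>2 - (cmod w)\<^sup>2 / n"
    by (simp add: nrm_add_square nrm_scal ip_scal_right power_mult_distrib w_def n_def)
  moreover have "(nrm L)\<^sup>2 \<le> (nrm (L + scal t k))\<^sup>2"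
    using min[of t] nrm_nonneg by (simp add: power_mono)
  ultimately have "(cmod w)\<^sup>2 / n \<le> 0"
    by simp
  then show ?thesis
    using n by (simp add: w_def divide_le_0_iff)
qed simp

lemma level_set_orthogonal_point:
  assumes add: "\<And>x y. f (x + y) = f x + f y" and hom: "\<And>a x. f (scal a x) = a * f x"
    and bound: "\<And>x. cmod (f x) \<le> K * nrm x" and "f u = 1"
  obtains L where "f L = 1" "\<And>k. f k = 0 \<Longrightarrow> ip L k = 0"
proof -
  have nonempty: "{x. f x = 1} \<noteq> {}"
    using \<open>f u = 1\<close> by blast
  have midpoint: "f (scal (1/2) (x + y)) = 1" if "f x = 1" "f y = 1" for x y
    using that by (simp add: add hom)
  have closed: "f L = 1" if "\<And>n. f (X n) = 1" "converges_to X L" for X L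
  proof -
    have "f (X n - L) = 1 - f L" for n
      using add[of "X n - L" L] that(1)[of n] by (simp add: eq_diff_eq)
    then have "cmod (1 - f L) \<le> K * nrm (X n - L)" for n
      using bound[of "X n - L"] by metis
    moreover have "(\<lambda>n. K * nrm (X n - L)) \<longlonglongrightarrow> 0"
      using that(2) unfolding converges_to_def by (rule tendsto_mult_right_zero)
    ultimately have "cmod (1 - f L) \<le> 0"
      using LIMSEQ_le_const[of _ 0 "cmod (1 - f L)"] by blast
    then show ?thesis
      by simp
  qed
  obtain L where L: "f L = 1" and min: "\<And>x. f x = 1 \<Longrightarrow> nrm L \<le> nrm x"
    using min_norm_point[of "{x. f x = 1}", OF nonempty] midpoint closed by auto
  have "ip L k = 0" if "f k = 0" for k
    using that L by (intro min_norm_orthogonal min) (simp add: add hom)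
  then show ?thesis
    using that L by blast
qed

lemma riesz_representation:
  assumes add: "\<And>x y. f (x + y) = f x + f y" and hom: "\<And>a x. f (scal a x) = a * f x"
    and bound: "\<And>x. cmod (f x) \<le> K * nrm x"
  shows "\<exists>z. \<forall>x. f x = ip x z"
proof (cases "\<forall>x. f x = 0")
  case False
  then obtain u where "f u \<noteq> 0"
    by blast
  then have "f (scal (1 / f u) u) = 1"
    by (simp add: hom)
  then obtain L where L: "f L = 1" and orth: "\<And>k. f k = 0 \<Longrightarrow> ip L k = 0"
    using level_set_orthogonal_point[OF add hom bound] by metis
  have f_diff: "f (x - y) = f x - f y" for x y
    using add[of "x - y" y] by simp
  have "L \<noteq> 0"
    using L hom[of 0 0] by auto
  then have nL: "(nrm L)\<^sup>2 \<noteq> 0"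
    using nrm_pos by force
  have "f x = ip x (scal (complex_of_real (1 / (nrm L)\<^sup>2)) L)" for x
  proof -
    have "ip L (x - scal (f x) L) = 0"
      using L by (intro orth) (simp add: f_diff hom)
    then have "ip (x - scal (f x) L) L = 0"
      using ip_conj_sym[of "x - scal (f x) L" L] by simp
    then have "ip x L = f x * complex_of_real ((nrm L)\<^sup>2)"
      by (simp add: ip_diff_left ip_scal_left ip_self)
    then show ?thesis
      using nL by (simp add: ip_scal_right)
  qed
  then show ?thesis
    by blast
qed (intro exI[of _ 0], simp)

lemma adjoint_exists:
  assumes A: "bop scal ip A"
  shows "\<exists>B. bop scal ip B \<and> (\<forall>x y. ip (A x) y = ip x (B y))"
proof -
  obtain K where K: "K > 0" "\<And>x. nrm (A x) \<le> K * nrm x"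
    using bop_bound[OF A] by blast
  have "\<exists>z. \<forall>x. ip (A x) y = ip x z" for y
  proof (rule riesz_representation)
    show "ip (A (x + x')) y = ip (A x) y + ip (A x') y" for x x'
      by (simp add: bop_add[OF A] ip_add_left)
    show "ip (A (scal a x)) y = a * ip (A x) y" for a x
      by (simp add: bop_scal[OF A] ip_scal_left)
    show "cmod (ip (A x) y) \<le> K * nrm y * nrm x" for x
      using cauchy_schwarz[of "A x" y] mult_right_mono[OF K(2)[of x] nrm_nonneg[of y]]
      by (simp add: mult_ac)
  qed
  then obtain B where B: "\<And>x y. ip (A x) y = ip x (B y)"
    by metis
  have "bop scal ip B"
  proof (rule bopI[where K=K])
    show "B (y + y') = B y + B y'" for y y'
      by (rule ip_right_cancel) (simp add: B[symmetric] ip_add_right)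
    show "B (scal a y) = scal a (B y)" for a y
      by (rule ip_right_cancel) (simp add: B[symmetric] ip_scal_right)
    show "nrm (B y) \<le> K * nrm y" for y
    proof (cases "B y = 0")
      case False
      have "(nrm (B y))\<^sup>2 = Re (ip (A (B y)) y)"
        by (simp add: nrm_square B)
      also have "\<dots> \<le> nrm (A (B y)) * nrm y"
        by (rule Re_ip_le)
      also have "\<dots> \<le> K * nrm (B y) * nrm y"
        using K(2) nrm_nonneg[of y] by (rule mult_right_mono)
      finally show ?thesis
        using nrm_pos[OF False] by (simp add: power2_eq_square mult_ac)
    qed (use K nrm_nonneg in simp)
  qed
  then show ?thesis
    using B by blast
qed

lemma
  assumes "bop scal ip A"
  shows bop_adj: "bop scal ip (adj scal ip A)"
    and adj_ip: "ip (A x) y = ip x (adj scal ip A y)"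
  using someI_ex[OF adjoint_exists[OF assms]] unfolding adj_def by blast+

lemma coercive_contraction:
  assumes P: "bop scal ip P" and m: "m > 0"
    and coercive: "\<And>x. m * (nrm x)\<^sup>2 \<le> Re (ip (P x) x)"
  obtains t q where "t > 0" "0 \<le> q" "q < 1" "\<And>x. nrm (x - scal (complex_of_real t) (P x)) \<le> q * nrm x"
proof -
  obtain KP where KP: "KP > 0" "\<And>x. nrm (P x) \<le> KP * nrm x"
    using bop_bound[OF P] by blast
  define t where "t = m / (KP\<^sup>2 + 1)"
  have "KP\<^sup>2 + 1 > 0"
    by (simp add: add_nonneg_pos)
  then have t: "t > 0" "t * KP\<^sup>2 < m"
    using m by (simp_all add: t_def field_simps)
  define q where "q = 1 + t\<^sup>2 * KP\<^sup>2 - 2 * t * m"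
  have "t\<^sup>2 * KP\<^sup>2 < t * m"
    using mult_strict_left_mono[OF t(2) t(1)] by (simp add: power2_eq_square mult_ac)
  moreover have "0 < t * m"
    using t(1) m by simp
  ultimately have q: "q < 1"
    unfolding q_def by linarith
  have sq: "(nrm (x - scal (complex_of_real t) (P x)))\<^sup>2 \<le> max q 0 * (nrm x)\<^sup>2" for x
  proof -
    have "Re (ip x (scal (complex_of_real t) (P x))) = t * Re (ip (P x) x)"
      using ip_conj_sym[of x "P x"] by (simp add: ip_scal_right)
    moreover have "t\<^sup>2 * (nrm (P x))\<^sup>2 \<le> t\<^sup>2 * (KP * nrm x)\<^sup>2"
      using KP(2)[of x] nrm_nonneg by (simp add: mult_left_mono power_mono)
    moreover have "t * (m * (nrm x)\<^sup>2) \<le> t * Re (ip (P x) x)"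
      using coercive[of x] t(1) by simp
    ultimately have "(nrm (x - scal (complex_of_real t) (P x)))\<^sup>2 \<le> q * (nrm x)\<^sup>2"
      unfolding q_def by (simp add: nrm_diff_square nrm_scal power_mult_distrib algebra_simps)
    then show ?thesis
      by (meson max.cobounded1 mult_right_mono order_trans zero_le_power2)
  qed
  have "nrm (x - scal (complex_of_real t) (P x)) \<le> sqrt (max q 0) * nrm x" for x
    using real_sqrt_le_mono[OF sq[of x]] by (simp add: real_sqrt_mult nrm_nonneg)
  moreover have "0 \<le> sqrt (max q 0)" "sqrt (max q 0) < 1"
    using q by (simp_all add: real_sqrt_lt_1_iff)
  ultimately show ?thesis
    by (intro that[OF t(1)])
qed

lemma coercive_invertible:
  assumes P: "bop scal ip P" and m: "m > 0"
    and coercive: "\<And>x. m * (nrm x)\<^sup>2 \<le> Re (ip (P x) x)"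
  obtains M where "bop scal ip M" "\<And>x. M (P x) = x" "\<And>y. P (M y) = y"
proof (rule bounded_below_surj_inverse[OF P])
  show "nrm x \<le> (1 / m) * nrm (P x)" for x
  proof (cases "x = 0")
    case False
    have "m * nrm x * nrm x \<le> nrm (P x) * nrm x"
      using coercive[of x] Re_ip_le[of "P x" x] by (simp add: power2_eq_square mult_ac)
    then show ?thesis
      using nrm_pos[OF False] m by (simp add: field_simps)
  qed (use m nrm_nonneg in simp)
  obtain t q where tq: "t > 0" "0 \<le> q" "q < 1"
    and E: "\<And>x. nrm (x - scal (complex_of_real t) (P x)) \<le> q * nrm x"
    using coercive_contraction[OF P m coercive] by metis
  \<comment> \<open>\<open>t P = I - (I - t P)\<close> with \<open>I - t P\<close> a contraction\<close>
  obtain W where W: "\<And>y. W y - (W y - scal (complex_of_real t) (P (W y))) = y"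
    using neumann_inverse[OF bop_minus_op[OF bop_id bop_scal_op[OF P]] E tq(2,3)] by metis
  show "\<exists>x. P x = y" for y
    using W[of y] by (intro exI[of _ "scal (complex_of_real t) (W y)"]) (simp add: bop_scal[OF P])
qed (rule that)

lemma gram_invertible:
  assumes T: "bop scal ip T" and S: "bop scal ip S" "\<And>x. S (T x) = x"
  obtains M where "bop scal ip M" "\<And>x. M (adj scal ip T (T x)) = x" "\<And>y. adj scal ip T (T (M y)) = y"
proof -
  obtain KS where KS: "KS > 0" "\<And>x. nrm (S x) \<le> KS * nrm x"
    using bop_bound[OF S(1)] by blast
  have "1 / KS\<^sup>2 * (nrm x)\<^sup>2 \<le> Re (ip (adj scal ip T (T x)) x)" for x
  proof -
    have "nrm x \<le> KS * nrm (T x)"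
      using KS(2)[of "T x"] S(2) by simp
    then have "(nrm x)\<^sup>2 \<le> KS\<^sup>2 * (nrm (T x))\<^sup>2"
      using nrm_nonneg power_mono by (fastforce simp: power_mult_distrib[symmetric])
    moreover have "Re (ip (adj scal ip T (T x)) x) = (nrm (T x))\<^sup>2"
      using ip_conj_sym[of "adj scal ip T (T x)" x] adj_ip[OF T, of x "T x"] by (simp add: nrm_square)
    ultimately show ?thesis
      using KS(1) by (simp add: field_simps)
  qed
  moreover have "1 / KS\<^sup>2 > 0"
    using KS(1) by simp
  ultimately show ?thesis
    using coercive_invertible[OF bop_comp[OF bop_adj[OF T] T]] that by metis
qed

lemma inverse_selfadjoint:
  assumes "\<And>x y. ip (P x) y = ip x (P y)" "\<And>y. P (M y) = y"
  shows "ip (M x) y = ip x (M y)"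
  using assms(1)[of "M x" "M y"] by (simp add: assms(2))

lemma cauchy_dual_adjoint:
  assumes T: "bop scal ip T" and "left_invertible scal ip T"
  obtains L where "bop scal ip L" "\<And>x. L (T x) = x"
    "\<And>x y. ip (cauchy_dual scal ip T y) x = ip y (L x)"
proof -
  define Ta where "Ta = adj scal ip T"
  obtain S where S: "bop scal ip S" "\<And>x. S (T x) = x"
    using assms(2) unfolding left_invertible_def by (auto simp: fun_eq_iff)
  obtain M0 where "bop scal ip M0" "\<And>x. M0 (Ta (T x)) = x" "\<And>y. Ta (T (M0 y)) = y"
    using gram_invertible[OF T S] unfolding Ta_def by metis
  then have "\<exists>M. bop scal ip M \<and> M \<circ> (Ta \<circ> T) = id \<and> (Ta \<circ> T) \<circ> M = id"
    by (intro exI[of _ M0]) (simp add: fun_eq_iff)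
  then have "bop scal ip (op_inv scal ip (Ta \<circ> T)) \<and> op_inv scal ip (Ta \<circ> T) \<circ> (Ta \<circ> T) = id
      \<and> (Ta \<circ> T) \<circ> op_inv scal ip (Ta \<circ> T) = id"
    unfolding op_inv_def by (rule someI_ex)
  then obtain M where M: "bop scal ip M" "\<And>x. M (Ta (T x)) = x" "\<And>y. Ta (T (M y)) = y"
    and dual: "cauchy_dual scal ip T = (\<lambda>y. T (M y))"
    unfolding cauchy_dual_def Ta_def by (auto simp: fun_eq_iff)
  have Ta: "ip (T x) y = ip x (Ta y)" for x y
    unfolding Ta_def by (rule adj_ip[OF T])
  have "ip (Ta (T x)) y = ip x (Ta (T y))" for x y
    using Ta[of y "T x"] Ta[of x "T y"] ip_conj_sym[of "Ta (T x)" y] ip_conj_sym[of "T x" "T y"] by simp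
  then have M_sa: "ip (M x) y = ip x (M y)" for x y
    by (rule inverse_selfadjoint) (rule M(3))
  show ?thesis
  proof (rule that)
    show "bop scal ip (\<lambda>x. M (Ta x))"
      using bop_comp[OF M(1) bop_adj[OF T]] unfolding Ta_def .
    show "M (Ta (T x)) = x" for x
      by (rule M(2))
    show "ip (cauchy_dual scal ip T y) x = ip y (M (Ta x))" for x y
      by (simp add: dual Ta M_sa)
  qed
qed

lemma orthogonal_to_range:
  assumes A: "bop scal ip A" and S: "bop scal ip S" "\<And>x. S (A x) = x"
    and z: "\<And>x. A x \<noteq> z"
  obtains y where "y \<noteq> 0" "\<And>x. ip (A x) y = 0"
proof -
  define Aa where "Aa = adj scal ip A"
  obtain M where M: "\<And>y. Aa (A (M y)) = y"
    using gram_invertible[OF A S] unfolding Aa_def by metis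
  define y where "y = z - A (M (Aa z))"
  have "Aa y = 0"
    unfolding y_def Aa_def by (simp add: bop_diff[OF bop_adj[OF A]] M[unfolded Aa_def])
  then have "ip (A x) y = 0" for x
    by (simp add: adj_ip[OF A] Aa_def)
  moreover have "y \<noteq> 0"
    unfolding y_def using z[of "M (Aa z)"] by simp
  ultimately show ?thesis
    using that by blast
qed

lemma not_surj_near_left_invertible:
  assumes A: "bop scal ip A" and S: "bop scal ip S" "\<And>x. S (A x) = x"
    and KS: "KS > 0" "\<And>x. nrm (S x) \<le> KS * nrm x"
    and z: "\<And>x. A x \<noteq> z"
    and near: "\<And>x. nrm (B x - A x) \<le> e * nrm x" and e: "0 \<le> e" "e * KS \<le> 1/4"
  shows "\<not> surj B"
proof
  assume "surj B"
  obtain y where y: "y \<noteq> 0" "\<And>x. ip (A x) y = 0"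
    using orthogonal_to_range[OF A S z] by metis
  obtain x where Bx: "B x = y"
    using surjD[OF \<open>surj B\<close>, of y] by auto
  have "nrm x \<le> KS * nrm (A x)"
    using KS(2)[of "A x"] S(2) by simp
  also have "nrm (A x) \<le> nrm y + e * nrm x"
    using nrm_triangle[of "B x" "A x - B x"] nrm_minus_commute[of "B x" "A x"] near[of x] Bx by simp
  finally have "nrm x \<le> KS * (nrm y + e * nrm x)"
    using KS(1) by (simp add: mult_left_mono)
  then have x: "(1 - e * KS) * nrm x \<le> KS * nrm y"
    by (simp add: algebra_simps)
  \<comment> \<open>\<open>y\<close> is orthogonal to \<open>A x\<close> and close to it, so it is short compared with \<open>x\<close>.\<close>
  have "(nrm y)\<^sup>2 \<le> (nrm (y - A x))\<^sup>2"
    using nrm_diff_square[of y "A x"] y(2)[of x] ip_conj_sym[of y "A x"] by simp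
  then have "nrm y \<le> nrm (B x - A x)"
    unfolding Bx using nrm_nonneg by (rule power2_le_imp_le)
  also have "\<dots> \<le> e * nrm x"
    by (rule near)
  finally have "(1 - e * KS) * nrm y \<le> e * ((1 - e * KS) * nrm x)"
    using e by (simp add: mult_left_mono mult.left_commute)
  also have "\<dots> \<le> e * (KS * nrm y)"
    using x e(1) by (rule mult_left_mono)
  finally have "(1 - 2 * (e * KS)) * nrm y \<le> 0"
    by (simp add: algebra_simps)
  moreover have "1 - 2 * (e * KS) > 0"
    using e by simp
  ultimately show False
    using nrm_pos[OF y(1)] by (simp add: mult_le_0_iff)
qed

lemma right_invertible_near_right_invertible:
  assumes A: "bop scal ip A" and R: "bop scal ip R" "\<And>y. A (R y) = y"
    and KR: "\<And>y. nrm (R y) \<le> KR * nrm y"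
    and B: "bop scal ip B" and near: "\<And>x. nrm (B x - A x) \<le> e * nrm x"
    and e: "0 \<le> e" "0 \<le> KR" "e * KR < 1"
  shows "right_invertible scal ip B"
proof -
  define E where "E y = A (R y) - B (R y)" for y
  have E: "bop scal ip E"
    unfolding E_def by (rule bop_minus_op[OF bop_comp[OF A R(1)] bop_comp[OF B R(1)]])
  have E_bound: "nrm (E y) \<le> (e * KR) * nrm y" for y
  proof -
    have "nrm (E y) \<le> e * nrm (R y)"
      unfolding E_def by (subst nrm_minus_commute) (rule near)
    also have "\<dots> \<le> e * (KR * nrm y)"
      using KR e(1) by (rule mult_left_mono)
    finally show ?thesis
      by simp
  qed
  moreover have "0 \<le> e * KR"
    using e(1,2) by simp
  ultimately obtain W where W: "bop scal ip W" "\<And>y. W y - E (W y) = y"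
    using neumann_inverse[OF E _ _ e(3)] by metis
  have "B (R (W y)) = y" for y
    using W(2)[of y] by (simp add: E_def R(2))
  then have "B \<circ> (\<lambda>y. R (W y)) = id"
    by (simp add: fun_eq_iff)
  then show ?thesis
    unfolding right_invertible_def using bop_comp[OF R(1) W(1)] by blast
qed

lemma left_right_inverse_invertible:
  assumes "bop scal ip S" "\<And>x. S (A x) = x" "\<And>y. A (R y) = y"
  shows "op_invertible scal ip A"
proof -
  have "A (S y) = y" for y
    using assms(2)[of "R y"] assms(3)[of y] by simp
  then show ?thesis
    unfolding op_invertible_def using assms(1,2) by (intro exI[of _ S]) (simp add: fun_eq_iff)
qed

lemma bop_shift_op: "bop scal ip T \<Longrightarrow> bop scal ip (shift_op scal T l)"
  unfolding shift_op_def by (rule bop_minus_op[OF _ bop_scal_id])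

lemma shift_op_0 [simp]: "shift_op scal T 0 = T"
  by (simp add: shift_op_def fun_eq_iff)

lemma nrm_shift_op_diff: "nrm (shift_op scal T l' x - shift_op scal T l x) = cmod (l - l') * nrm x"
proof -
  have "shift_op scal T l' x - shift_op scal T l x = scal (l - l') x"
    by (simp add: shift_op_def scal_diff_left)
  then show ?thesis
    by (simp add: nrm_scal)
qed

lemma right_spectrum_subset_op_spectrum: "right_spectrum scal ip T \<subseteq> op_spectrum scal ip T"
  unfolding right_spectrum_def op_spectrum_def op_invertible_def right_invertible_def by blast

lemma open_right_resolvent:
  assumes T: "bop scal ip T"
  shows "open (- right_spectrum scal ip T)"
  unfolding open_contains_ball
proof
  fix l
  assume "l \<in> - right_spectrum scal ip T"
  then obtain R where R: "bop scal ip R" "\<And>y. shift_op scal T l (R y) = y"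
    unfolding right_spectrum_def right_invertible_def by (auto simp: fun_eq_iff)
  obtain KR where KR: "KR > 0" "\<And>y. nrm (R y) \<le> KR * nrm y"
    using bop_bound[OF R(1)] by blast
  have "right_invertible scal ip (shift_op scal T l')" if "l' \<in> ball l (1 / KR)" for l'
  proof (rule right_invertible_near_right_invertible[OF bop_shift_op[OF T] R KR(2) bop_shift_op[OF T]])
    show "nrm (shift_op scal T l' x - shift_op scal T l x) \<le> cmod (l - l') * nrm x" for x
      by (simp add: nrm_shift_op_diff)
    show "cmod (l - l') * KR < 1"
      using that KR(1) by (simp add: dist_norm field_simps)
  qed (use KR(1) in simp_all)
  then have "ball l (1 / KR) \<subseteq> - right_spectrum scal ip T"
    unfolding right_spectrum_def by blast
  then show "\<exists>e>0. ball l e \<subseteq> - right_spectrum scal ip T"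
    using KR(1) by (intro exI[of _ "1 / KR"]) simp
qed

lemma closed_right_spectrum: "bop scal ip T \<Longrightarrow> closed (right_spectrum scal ip T)"
  using open_right_resolvent by (simp add: closed_def)

lemma right_invertible_surj: "right_invertible scal ip A \<Longrightarrow> surj A"
  unfolding right_invertible_def by (metis comp_apply id_apply surjI)

lemma open_right_spectrum_inter:
  assumes T: "bop scal ip T" and U: "open U"
    and li: "\<And>l. l \<in> U \<Longrightarrow> left_invertible scal ip (shift_op scal T l)"
  shows "open (U \<inter> right_spectrum scal ip T)"
  unfolding open_contains_ball
proof
  fix l
  assume l: "l \<in> U \<inter> right_spectrum scal ip T"
  obtain r where r: "r > 0" "ball l r \<subseteq> U"
    using U l open_contains_ball by blast
  obtain G where G: "bop scal ip G" "\<And>x. G (shift_op scal T l x) = x"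
    using li[of l] l unfolding left_invertible_def by (auto simp: fun_eq_iff)
  obtain KG where KG: "KG > 0" "\<And>y. nrm (G y) \<le> KG * nrm y"
    using bop_bound[OF G(1)] by blast
  have "\<not> surj (shift_op scal T l)"
  proof
    assume "surj (shift_op scal T l)"
    then have "shift_op scal T l (G y) = y" for y
      using G(2) by (metis surjD)
    then have "right_invertible scal ip (shift_op scal T l)"
      unfolding right_invertible_def using G(1) by (intro exI[of _ G]) (simp add: fun_eq_iff)
    then show False
      using l unfolding right_spectrum_def by simp
  qed
  then obtain z where z: "\<And>x. shift_op scal T l x \<noteq> z"
    unfolding surj_def by metis
  have "\<not> surj (shift_op scal T l')" if "l' \<in> ball l (1 / (4 * KG))" for l'
  proof (rule not_surj_near_left_invertible[OF bop_shift_op[OF T] G KG z])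
    show "nrm (shift_op scal T l' x - shift_op scal T l x) \<le> cmod (l - l') * nrm x" for x
      by (simp add: nrm_shift_op_diff)
    show "cmod (l - l') * KG \<le> 1/4"
      using that KG(1) by (simp add: dist_norm field_simps)
  qed simp
  then have "ball l (min r (1 / (4 * KG))) \<subseteq> U \<inter> right_spectrum scal ip T"
    using r(2) right_invertible_surj unfolding right_spectrum_def by fastforce
  then show "\<exists>e>0. ball l e \<subseteq> U \<inter> right_spectrum scal ip T"
    using r(1) KG(1) by (intro exI[of _ "min r (1 / (4 * KG))"]) simp
qed

lemma op_spectrum_subset_cball:
  assumes T: "bop scal ip T" and contraction: "\<And>x. nrm (T x) \<le> nrm x"
  shows "op_spectrum scal ip T \<subseteq> cball 0 1"
proof
  fix l
  assume l_spec: "l \<in> op_spectrum scal ip T"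
  show "l \<in> cball 0 1"
  proof (rule ccontr)
    assume "l \<notin> cball 0 1"
    then have l: "cmod l > 1"
      by simp
    then have l0: "l \<noteq> 0"
      by auto
    define E where "E x = scal (1 / l) (T x)" for x
    have "nrm (E x) \<le> (1 / cmod l) * nrm x" for x
      using contraction[of x] l by (simp add: E_def nrm_scal norm_divide divide_right_mono)
    moreover have "0 \<le> 1 / cmod l" "1 / cmod l < 1"
      using l by (simp_all add: divide_less_eq)
    ultimately obtain W where W: "bop scal ip W" "\<And>y. W y - E (W y) = y" "\<And>x. W (x - E x) = x"
      using neumann_inverse[OF bop_scal_op[OF T, of "1 / l"]] unfolding E_def by metis
    have shift: "shift_op scal T l x = scal (- l) (x - E x)" for x
      using l0 by (simp add: E_def shift_op_def scal_diff_right scal_scal scal_minus_left)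
    have "shift_op scal T l (W (scal (- 1 / l) y)) = y" for y
      using l0 by (simp add: shift W(2) scal_scal)
    moreover have "W (scal (- 1 / l) (shift_op scal T l x)) = x" for x
      using l0 by (simp add: shift W(3) scal_scal)
    ultimately have "op_invertible scal ip (shift_op scal T l)"
      unfolding op_invertible_def using bop_comp[OF W(1) bop_scal_id]
      by (intro exI[of _ "\<lambda>y. W (scal (- 1 / l) y)"]) (simp add: fun_eq_iff)
    then show False
      using l_spec unfolding op_spectrum_def by simp
  qed
qed

lemma left_invertible_shift_of_cauchy_dual:
  assumes T: "bop scal ip T" and li: "left_invertible scal ip T" and l: "l \<noteq> 0"
    and mu: "cnj (1 / l) \<notin> right_spectrum scal ip (cauchy_dual scal ip T)"
  shows "left_invertible scal ip (shift_op scal T l)"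
proof -
  obtain L where L: "bop scal ip L" "\<And>x. L (T x) = x"
    and dual: "\<And>x y. ip (cauchy_dual scal ip T y) x = ip y (L x)"
    using cauchy_dual_adjoint[OF T li] by metis
  obtain R where R: "bop scal ip R" "\<And>y. shift_op scal (cauchy_dual scal ip T) (cnj (1 / l)) (R y) = y"
    using mu unfolding right_spectrum_def right_invertible_def by (auto simp: fun_eq_iff)
  define G where "G y = adj scal ip R (scal (- 1 / l) (L y))" for y
  \<comment> \<open>Taking adjoints in \<open>(T' - cnj (1 / l)) R = I\<close> gives \<open>R\<^sup>* (L - 1 / l) = I\<close>, and \<open>L - 1 / l = - L (T - l) / l\<close>.\<close>
  have "G (shift_op scal T l x) = x" for x
  proof (rule ip_left_cancel)
    fix y
    have RT: "cauchy_dual scal ip T (R y) = y + scal (cnj (1 / l)) (R y)"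
      using R(2)[of y] by (simp add: shift_op_def algebra_simps)
    have RL: "ip (R y) (L x) = ip y x + cnj (1 / l) * ip (R y) x"
      using dual[where x=x and y="R y"] by (simp add: RT ip_add_left ip_scal_left)
    have "L (shift_op scal T l x) = x - scal l (L x)"
      by (simp add: shift_op_def bop_diff[OF L(1)] bop_scal[OF L(1)] L(2))
    then have "ip (R y) (scal (- 1 / l) (L (shift_op scal T l x)))
        = cnj (- 1 / l) * (ip (R y) x - cnj l * ip (R y) (L x))"
      by (simp add: ip_scal_right ip_diff_right)
    also have "\<dots> = ip y x"
      unfolding RL using l by (simp add: field_simps)
    finally have "ip (R y) (scal (- 1 / l) (L (shift_op scal T l x))) = ip y x" .
    then have "ip (G (shift_op scal T l x)) y = cnj (ip y x)"
      unfolding G_def using ip_conj_sym adj_ip[OF R(1)] by metis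
    then show "ip (G (shift_op scal T l x)) y = ip x y"
      using ip_conj_sym[of x y] by simp
  qed
  moreover have "bop scal ip G"
    unfolding G_def by (rule bop_comp[OF bop_adj[OF R(1)] bop_scal_op[OF L(1)]])
  ultimately show ?thesis
    unfolding left_invertible_def by (intro exI[of _ G]) (simp add: fun_eq_iff)
qed

lemma ball_subset_right_minus_left_spectrum:
  assumes T: "bop scal ip T" and li: "left_invertible scal ip T"
    and singular: "0 \<in> op_spectrum scal ip T"
    and dual: "right_spectrum scal ip (cauchy_dual scal ip T) \<subseteq> cball 0 1"
  shows "ball 0 1 \<subseteq> right_spectrum scal ip T - left_spectrum scal ip T"
proof -
  have li_ball: "left_invertible scal ip (shift_op scal T l)" if "l \<in> ball 0 1" for l
  proof (cases "l = 0")
    case False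
    have "cmod (cnj (1 / l)) > 1"
      using that False by (simp add: norm_divide)
    then have "cnj (1 / l) \<notin> right_spectrum scal ip (cauchy_dual scal ip T)"
      using dual by auto
    then show ?thesis
      by (rule left_invertible_shift_of_cauchy_dual[OF T li False])
  qed (simp add: li)
  have "\<not> right_invertible scal ip T"
  proof
    assume "right_invertible scal ip T"
    then obtain R where "\<And>y. T (R y) = y"
      unfolding right_invertible_def by (auto simp: fun_eq_iff)
    moreover obtain S where "bop scal ip S" "\<And>x. S (T x) = x"
      using li unfolding left_invertible_def by (auto simp: fun_eq_iff)
    ultimately have "op_invertible scal ip T"
      using left_right_inverse_invertible by metis
    then show False
      using singular unfolding op_spectrum_def by simp
  qed
  then have "0 \<in> ball 0 1 \<inter> right_spectrum scal ip T \<inter> ball 0 1"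
    unfolding right_spectrum_def by simp
  moreover have "- right_spectrum scal ip T \<inter> ball 0 1 = {}
      \<or> ball 0 1 \<inter> right_spectrum scal ip T \<inter> ball 0 1 = {}"
    by (rule connectedD[OF connected_ball open_right_resolvent[OF T]
          open_right_spectrum_inter[OF T open_ball li_ball]]) auto
  ultimately have "ball 0 1 \<subseteq> right_spectrum scal ip T"
    by blast
  then show ?thesis
    using li_ball unfolding left_spectrum_def by auto
qed

lemma spectra_eq_cball:
  assumes T: "bop scal ip T" and li: "left_invertible scal ip T"
    and singular: "0 \<in> op_spectrum scal ip T"
    and dual: "right_spectrum scal ip (cauchy_dual scal ip T) \<subseteq> cball 0 1"
    and contraction: "\<And>x. nrm (T x) \<le> nrm x"
  shows "right_spectrum scal ip T = cball 0 1" "op_spectrum scal ip T = cball 0 1"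
proof -
  have "closure (ball 0 1) \<subseteq> right_spectrum scal ip T"
    using ball_subset_right_minus_left_spectrum[OF T li singular dual]
    by (intro closure_minimal closed_right_spectrum[OF T]) auto
  then show "right_spectrum scal ip T = cball 0 1" "op_spectrum scal ip T = cball 0 1"
    using right_spectrum_subset_op_spectrum op_spectrum_subset_cball[OF T contraction] by auto
qed

end

theorem corollary4p5:
  fixes scal :: "complex \<Rightarrow> 'a::ab_group_add \<Rightarrow> 'a"
    and ip :: "'a \<Rightarrow> 'a \<Rightarrow> complex"
    and T :: "'a \<Rightarrow> 'a"
  assumes H: "complex_hilbert_space scal ip"
    and bT: "bop scal ip T"
    and li: "left_invertible scal ip T"
    and z: "0 \<in> op_spectrum scal ip T"
  shows "(right_spectrum scal ip (cauchy_dual scal ip T) \<subseteq> cball 0 1 \<longrightarrow>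
            ball 0 1 \<subseteq> right_spectrum scal ip T - left_spectrum scal ip T)
       \<and> ((\<forall>x. hnorm ip (T x) \<le> hnorm ip x) \<and>
            right_spectrum scal ip (cauchy_dual scal ip T) \<subseteq> cball 0 1 \<longrightarrow>
            right_spectrum scal ip T = cball 0 1 \<and> op_spectrum scal ip T = cball 0 1)"
proof -
  interpret complex_hilbert scal ip
    by (rule complex_hilbert.intro[OF H])
  show ?thesis
    using ball_subset_right_minus_left_spectrum[OF bT li z] spectra_eq_cball[OF bT li z] by blast
qed

end
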